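(* Let $(a_i)_{i\in\mathbb N}\subset\mathbb R_+$ be nonincreasing and let $b_i>0$ for $i\in\mathbb N$. Then for $0<p<1$ and every $k\in\mathbb N$, $\sum_{i=k+1}^\infty a_ib_i\le\Bigl(\sum_{i\in\mathbb N}a_i^pb_i\Bigr)^{1/p}\Bigl(\sum_{i=1}^k b_i\Bigr)^{1-\frac1p}.$ *)

theory Defs
  imports Complex_Main
begin

end

theory Submission
  imports Defs
begin

(* Let S be the full series and B the head sum of the weights.  Since a is nonincreasing,
   a_i^p B \<le> S for every i > k, i.e. a_i^p \<le> S/B, hence a_i = a_i^p a_i^(1-p) \<le> (S/B)^(1/p - 1) a_i^p.
   Summing over i > k bounds the tail by (S/B)^(1/p - 1) S = S^(1/p) B^(1 - 1/p). *)

lemma le_powr_mult_powr_bound: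
  fixes x p M :: real
  assumes "0 \<le> x" "0 < p" "p \<le> 1" "x powr p \<le> M"
  shows "x \<le> x powr p * M powr (1 / p - 1)"
proof (cases "x = 0")
  case False
  then have x: "0 < x" using assms(1) by simp
  have exponent: "p * (1 / p - 1) = 1 - p"
    using assms(2) by (simp add: field_simps)
  have "x = x powr p * x powr (1 - p)"
    using x by (simp add: powr_add [symmetric])
  also have "x powr (1 - p) = (x powr p) powr (1 / p - 1)"
    by (simp add: powr_powr exponent)
  also have "\<dots> \<le> M powr (1 / p - 1)"
    using assms by (intro powr_mono2) (auto simp: field_simps)
  finally show ?thesis by (simp add: mult_left_mono)
qed simp

lemma powr_divide_mult_self:
  fixes S B r :: real
  assumes "0 \<le> S" "0 < B"
  shows "(S / B) powr r * S = S powr (r + 1) * B powr (- r)"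
proof (cases "S = 0")
  case False
  with assms have "(S / B) powr r * S = S powr r * S / B powr r"
    by (simp add: powr_divide)
  with assms False show ?thesis
    by (simp add: powr_add powr_minus divide_inverse)
qed simp

lemma powr_mult_sum_le_sum_antimono:
  fixes a b :: "nat \<Rightarrow> real" and p :: real
  assumes "\<And>j. j \<ge> 1 \<Longrightarrow> a j \<ge> 0"
    and "\<And>i j. 1 \<le> i \<Longrightarrow> i \<le> j \<Longrightarrow> a j \<le> a i"
    and "\<And>j. j \<ge> 1 \<Longrightarrow> b j \<ge> 0"
    and "0 \<le> p" "k < i"
  shows "a i powr p * (\<Sum>j = 1..k. b j) \<le> (\<Sum>j = 1..k. a j powr p * b j)"
  unfolding sum_distrib_left
proof (rule sum_mono)
  fix j assume "j \<in> {1..k}"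
  with assms have "a i powr p \<le> a j powr p"
    by (intro powr_mono2) auto
  with \<open>j \<in> {1..k}\<close> assms(3) show "a i powr p * b j \<le> a j powr p * b j"
    by (simp add: mult_right_mono)
qed

lemma
  fixes f g :: "nat \<Rightarrow> real"
  assumes f: "summable f" "\<And>n. 0 \<le> f n"
    and g: "\<And>n. n \<ge> k \<Longrightarrow> 0 \<le> g n" "\<And>n. n \<ge> k \<Longrightarrow> g n \<le> C * f n"
    and C: "0 \<le> C"
  shows summable_tail_dominated: "summable (\<lambda>n. g (n + k))"
    and suminf_tail_le_mult_suminf: "(\<Sum>n. g (n + k)) \<le> C * (\<Sum>n. f n)"
proof -
  have Cf: "summable (\<lambda>n. C * f (n + k))"
    using f by (intro summable_mult summable_ignore_initial_segment)
  show g_summable: "summable (\<lambda>n. g (n + k))"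
    using g by (intro summable_comparison_test [OF _ Cf]) auto
  have "(\<Sum>n. g (n + k)) \<le> (\<Sum>n. C * f (n + k))"
    using g by (intro suminf_le g_summable Cf) auto
  also have "\<dots> = C * (\<Sum>n. f (n + k))"
    using f by (intro suminf_mult summable_ignore_initial_segment)
  also have "(\<Sum>n. f (n + k)) \<le> (\<Sum>n. f n)"
    using suminf_split_initial_segment [OF f(1), of k] f(2) by (simp add: sum_nonneg)
  finally show "(\<Sum>n. g (n + k)) \<le> C * (\<Sum>n. f n)"
    using C by (simp add: mult_left_mono)
qed

lemma antimono_powr_le_suminf_div_sum:
  fixes a b :: "nat \<Rightarrow> real" and p :: real
  assumes "\<And>j. j \<ge> 1 \<Longrightarrow> a j \<ge> 0"
    and "\<And>i j. 1 \<le> i \<Longrightarrow> i \<le> j \<Longrightarrow> a j \<le> a i"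
    and b_pos: "\<And>j. j \<ge> 1 \<Longrightarrow> b j > 0"
    and "0 \<le> p" and k: "1 \<le> k" "k < i"
    and summ: "summable (\<lambda>n. a (n + 1) powr p * b (n + 1))"
  shows "a i powr p \<le> (\<Sum>n. a (n + 1) powr p * b (n + 1)) / (\<Sum>j = 1..k. b j)"
proof -
  have "a i powr p * (\<Sum>j = 1..k. b j) \<le> (\<Sum>j = 1..k. a j powr p * b j)"
    using assms by (intro powr_mult_sum_le_sum_antimono) (auto simp: less_imp_le)
  also have "\<dots> = (\<Sum>n<k. a (n + 1) powr p * b (n + 1))"
    by (simp add: sum.atLeast1_atMost_eq)
  also have "\<dots> \<le> (\<Sum>n. a (n + 1) powr p * b (n + 1))"
    using summ b_pos by (intro sum_le_suminf) (auto simp: less_imp_le)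
  finally show ?thesis
    using k b_pos sum_pos [of "{1..k}" b] by (simp add: pos_le_divide_eq)
qed

theorem lemma3p8:
  fixes a b :: "nat \<Rightarrow> real" and p :: real and k :: nat
  assumes a_nonneg: "\<And>i. i \<ge> 1 \<Longrightarrow> a i \<ge> 0"
    and a_noninc: "\<And>i j. 1 \<le> i \<Longrightarrow> i \<le> j \<Longrightarrow> a j \<le> a i"
    and b_pos: "\<And>i. i \<ge> 1 \<Longrightarrow> b i > 0"
    and p: "0 < p" "p < 1"
    and k: "k \<ge> 1"
    and summ: "summable (\<lambda>n. a (n + 1) powr p * b (n + 1))"
  shows "summable (\<lambda>n. a (n + k + 1) * b (n + k + 1)) \<and>
         (\<Sum>n. a (n + k + 1) * b (n + k + 1))
           \<le> (\<Sum>n. a (n + 1) powr p * b (n + 1)) powr (1 / p)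
              * (\<Sum>i = 1..k. b i) powr (1 - 1 / p)"
proof -
  define f where "f = (\<lambda>n. a (n + 1) powr p * b (n + 1))"
  define g where "g = (\<lambda>n. a (n + 1) * b (n + 1))"
  define S where "S = (\<Sum>n. f n)"
  define B where "B = (\<Sum>i = 1..k. b i)"
  define C where "C = (S / B) powr (1 / p - 1)"
  have f_summable: "summable f" and f_nonneg: "\<And>n. 0 \<le> f n"
    using summ b_pos by (auto simp: f_def less_imp_le)
  have g_nonneg: "0 \<le> g n" for n
    using a_nonneg [of "n + 1"] b_pos [of "n + 1"] by (simp add: g_def)
  have S_nonneg: "0 \<le> S"
    unfolding S_def using f_summable f_nonneg by (rule suminf_nonneg)
  have B_pos: "0 < B"
    unfolding B_def using k b_pos by (intro sum_pos) auto
  have g_le: "g n \<le> C * f n" if "k \<le> n" for n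
  proof -
    have "a (n + 1) powr p \<le> S / B"
      unfolding S_def B_def f_def using assms that
      by (intro antimono_powr_le_suminf_div_sum) auto
    then have "a (n + 1) \<le> a (n + 1) powr p * C"
      unfolding C_def using a_nonneg p by (intro le_powr_mult_powr_bound) auto
    then show ?thesis
      using b_pos [of "n + 1"] by (simp add: f_def g_def mult_right_mono mult_ac)
  qed
  have C_nonneg: "0 \<le> C"
    unfolding C_def by simp
  have "(\<Sum>n. g (n + k)) \<le> C * S"
    unfolding S_def using f_summable f_nonneg g_nonneg g_le C_nonneg
    by (rule suminf_tail_le_mult_suminf)
  also have "C * S = S powr (1 / p) * B powr (1 - 1 / p)"
    using powr_divide_mult_self [OF S_nonneg B_pos, of "1 / p - 1"] by (simp add: C_def)
  finally show ?thesis
    using summable_tail_dominated [OF f_summable f_nonneg g_nonneg g_le C_nonneg]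
    by (simp add: g_def f_def S_def B_def)
qed

end
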